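(* Let $\phi$ be a flow of a compact metric space $X$. (1) If $\phi$ is expansive on $X\setminus Sing(\phi)$, then $\phi$ is singular-expansive. (2) If $\phi$ is singular-expansive and $Sing(\phi)$ is open in $X$, then $\phi$ is expansive on $X\setminus Sing(\phi)$.
   Context: A flow is a continuous $\phi:\mathbb{R}\times X\to X$ with $\phi_0=\mathrm{id}$, $\phi_{t+s}=\phi_t\circ\phi_s$; $\phi_I(x)=\{\phi_t(x):t\in I\}$; $Sing(\phi)$ is the set of fixed points; $dist(z,A)=\inf_{a\in A}d(z,a)$, with $dist(z,\emptyset)=diam(X)$. $\phi$ is expansive on $\Lambda\subset X$ if for every $\epsilon>0$ there is $\delta>0$ such that whenever $x,y\in\Lambda$ and a continuous $s:\mathbb{R}\to\mathbb{R}$ with $s(0)=0$ satisfy $d(\phi_t(x),\phi_{s(t)}(y))\le\delta$ for all $t$, then $y\in\phi_{[-\epsilon,\epsilon]}(x)$. $\phi$ is singular-expansive if for every $\epsilon>0$ there is $\delta>0$ such that whenever $x,y\in X$ and an increasing homeomorphism $s:\mathbb{R}\to\mathbb{R}$ satisfy $d(\phi_t(x),\phi_{s(t)}(y))\le\delta\,dist(\phi_t(x),Sing(\phi))$ for all $t$, then $\phi_{s(t_0)}(y)\in\phi_{[t_0-\epsilon,t_0+\epsilon]}(x)$ for some $t_0\in\mathbb{R}$. *)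

theory Defs
  imports "HOL-Analysis.Analysis"
begin

text \<open>A flow on the whole space (the type 'a plays the role of X).\<close>
definition is_flow :: "(real \<Rightarrow> 'a::metric_space \<Rightarrow> 'a) \<Rightarrow> bool" where
  "is_flow \<phi> \<longleftrightarrow> continuous_on UNIV (\<lambda>(t, x). \<phi> t x)
     \<and> \<phi> 0 = id \<and> (\<forall>t s. \<phi> (t + s) = \<phi> t \<circ> \<phi> s)"

definition Sing :: "(real \<Rightarrow> 'a \<Rightarrow> 'a) \<Rightarrow> 'a set" where
  "Sing \<phi> = {x. \<forall>t. \<phi> t x = x}"

definition setdist_pt :: "'a::metric_space \<Rightarrow> 'a set \<Rightarrow> real" where
  "setdist_pt z A = (if A = {} then diameter (UNIV :: 'a set) else (INF a\<in>A. dist z a))"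

definition expansive_on :: "(real \<Rightarrow> 'a::metric_space \<Rightarrow> 'a) \<Rightarrow> 'a set \<Rightarrow> bool" where
  "expansive_on \<phi> \<Lambda> \<longleftrightarrow> (\<forall>\<epsilon>>0. \<exists>\<delta>>0. \<forall>x\<in>\<Lambda>. \<forall>y\<in>\<Lambda>. \<forall>s :: real \<Rightarrow> real.
     continuous_on UNIV s \<and> s 0 = 0 \<and> (\<forall>t. dist (\<phi> t x) (\<phi> (s t) y) \<le> \<delta>)
       \<longrightarrow> (\<exists>u\<in>{-\<epsilon>..\<epsilon>}. y = \<phi> u x))"

definition increasing_homeomorphism :: "(real \<Rightarrow> real) \<Rightarrow> bool" where
  "increasing_homeomorphism s \<longleftrightarrow> mono s \<and> (\<exists>g. homeomorphism UNIV UNIV s g)"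

definition singular_expansive :: "(real \<Rightarrow> 'a::metric_space \<Rightarrow> 'a) \<Rightarrow> bool" where
  "singular_expansive \<phi> \<longleftrightarrow> (\<forall>\<epsilon>>0. \<exists>\<delta>>0. \<forall>x y. \<forall>s :: real \<Rightarrow> real.
     increasing_homeomorphism s
     \<and> (\<forall>t. dist (\<phi> t x) (\<phi> (s t) y) \<le> \<delta> * setdist_pt (\<phi> t x) (Sing \<phi>))
       \<longrightarrow> (\<exists>t0. \<exists>u\<in>{t0-\<epsilon>..t0+\<epsilon>}. \<phi> (s t0) y = \<phi> u x))"

end

theory Submission
  imports Defs
begin

(*
  (1) Since dist(\<phi>_t x, Sing) \<le> diam X, a singular-expansive shadowing with constant \<delta> is an
  ordinary (\<delta> diam X)-shadowing after shifting the reparametrisation to fix 0; and for \<delta> < 1 the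
  shadowing point of a regular point is itself regular, because dist(x, y) \<le> \<delta> dist(x, Sing).

  (2) If Sing is open, the regular set is compact. Hence dist(-, Sing) is bounded below by some
  m > 0 on it, and for arbitrarily small b every regular point is moved by \<phi>_b and \<phi>_(-b) at least
  some \<eta> > 0 (otherwise a regular point would have arbitrarily small periods and be fixed). This
  uniform displacement is a barrier: a continuous time shift h with \<phi>_(t + h t) z \<eta>-close to
  \<phi>_t z can never reach \<plusminus>b. Applied on short time windows, it shows that the merely continuous
  reparametrisation s of a \<delta>-shadowing is coarsely increasing, so its piecewise-linear
  interpolation g is an increasing homeomorphism uniformly close to s. For small \<delta> this gives a
  singular-expansive shadowing, hence a hit \<phi>_(g t0) y = \<phi>_u x with u close to t0, and the
  barrier carries the hit back to time 0.
*)

lemma continuous_on_avoiding_value_same_side: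
  fixes g :: "real \<Rightarrow> real"
  assumes "p \<le> q" and "continuous_on {p..q} g" and "\<And>x. x \<in> {p..q} \<Longrightarrow> g x \<noteq> c"
  shows "g p < c \<longleftrightarrow> g q < c"
proof
  assume "g p < c"
  show "g q < c"
  proof (rule ccontr)
    assume "\<not> g q < c"
    then obtain x where "p \<le> x" "x \<le> q" "g x = c"
      using IVT'[of g p c q] \<open>g p < c\<close> assms(1,2) by auto
    with assms(3) show False
      by auto
  qed
next
  assume "g q < c"
  show "g p < c"
  proof (rule ccontr)
    assume "\<not> g p < c"
    then obtain x where "p \<le> x" "x \<le> q" "g x = c"
      using IVT2'[of g q c p] \<open>g q < c\<close> assms(1,2) by auto
    with assms(3) show False
      by auto
  qed
qed

lemma continuous_on_avoiding_bound_same_side: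
  fixes h :: "real \<Rightarrow> real"
  assumes "p \<le> q" and "continuous_on {p..q} h" and "\<And>x. x \<in> {p..q} \<Longrightarrow> \<bar>h x\<bar> \<noteq> b"
  shows "\<bar>h p\<bar> < b \<longleftrightarrow> \<bar>h q\<bar> < b"
proof (cases "b > 0")
  case True
  then have avoid: "h x \<noteq> b" "- h x \<noteq> b" if "x \<in> {p..q}" for x
    using assms(3)[OF that] by auto
  have "h p < b \<longleftrightarrow> h q < b"
    by (rule continuous_on_avoiding_value_same_side) (use assms(1,2) avoid in auto)
  moreover have "- h p < b \<longleftrightarrow> - h q < b"
    by (rule continuous_on_avoiding_value_same_side[where g = "\<lambda>x. - h x"])
      (use assms(1,2) avoid in \<open>auto intro: continuous_intros\<close>)
  ultimately show ?thesis
    by (simp add: abs_less_iff)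
qed auto

definition lin_interp :: "(int \<Rightarrow> real) \<Rightarrow> real \<Rightarrow> real \<Rightarrow> real" where
  "lin_interp S \<tau> t = S \<lfloor>t/\<tau>\<rfloor> + (t/\<tau> - \<lfloor>t/\<tau>\<rfloor>) * (S (\<lfloor>t/\<tau>\<rfloor> + 1) - S \<lfloor>t/\<tau>\<rfloor>)"

lemma lin_interp_node [simp]: "\<tau> > 0 \<Longrightarrow> lin_interp S \<tau> (of_int k * \<tau>) = S k"
  unfolding lin_interp_def by simp

lemma lin_interp_on_piece:
  assumes "\<tau> > 0" and "of_int k * \<tau> \<le> t" and "t \<le> (of_int k + 1) * \<tau>"
  shows "lin_interp S \<tau> t = S k + (t/\<tau> - k) * (S (k + 1) - S k)"
proof (cases "t = (of_int k + 1) * \<tau>")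
  case True
  then show ?thesis
    using lin_interp_node[OF assms(1), of S "k + 1"] assms(1) by simp
next
  case False
  then have "\<lfloor>t/\<tau>\<rfloor> = k"
    using assms by (simp add: floor_eq_iff field_simps)
  then show ?thesis
    unfolding lin_interp_def by simp
qed

lemma lin_interp_floor:
  assumes "\<tau> > 0"
  shows "lin_interp S \<tau> t = S \<lfloor>t/\<tau>\<rfloor> + (t/\<tau> - \<lfloor>t/\<tau>\<rfloor>) * (S (\<lfloor>t/\<tau>\<rfloor> + 1) - S \<lfloor>t/\<tau>\<rfloor>)"
    and "of_int \<lfloor>t/\<tau>\<rfloor> * \<tau> \<le> t" and "t < (of_int \<lfloor>t/\<tau>\<rfloor> + 1) * \<tau>"
  using floor_divide_lower[OF assms] floor_divide_upper[OF assms] by (auto simp: lin_interp_def)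

lemma continuous_on_lin_interp:
  assumes "\<tau> > 0"
  shows "continuous_on UNIV (lin_interp S \<tau>)"
proof (intro continuous_at_imp_continuous_on ballI)
  fix x :: real
  define k where "k = \<lfloor>x/\<tau>\<rfloor>"
  have piece: "continuous_on {of_int j * \<tau> .. (of_int j + 1) * \<tau>} (lin_interp S \<tau>)" for j
  proof -
    have "continuous_on {of_int j * \<tau> .. (of_int j + 1) * \<tau>}
        (\<lambda>t. S j + (t/\<tau> - j) * (S (j + 1) - S j))"
      by (intro continuous_intros) (use assms in auto)
    then show ?thesis
      by (rule continuous_on_eq) (use lin_interp_on_piece[OF assms] in auto)
  qed
  let ?U = "{of_int (k - 1) * \<tau> .. of_int k * \<tau>} \<union> {of_int k * \<tau> .. (of_int k + 1) * \<tau>}"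
  have "continuous_on ?U (lin_interp S \<tau>)"
    using piece[of "k - 1"] piece[of k] by (intro continuous_on_closed_Un) auto
  moreover have "x \<in> interior ?U"
  proof -
    have "{of_int (k - 1) * \<tau> <..< (of_int k + 1) * \<tau>} \<subseteq> ?U"
      by auto
    moreover have "x \<in> {of_int (k - 1) * \<tau> <..< (of_int k + 1) * \<tau>}"
      using lin_interp_floor(2,3)[OF assms, of x] assms unfolding k_def by (auto simp: algebra_simps)
    ultimately show ?thesis
      using interior_maximal[OF _ open_greaterThanLessThan] by blast
  qed
  ultimately show "isCont (lin_interp S \<tau>) x"
    by (rule continuous_on_interior)
qed

lemma strict_mono_lin_interp:
  assumes "\<tau> > 0" and inc: "\<And>k. S k < S (k + 1)"
  shows "strict_mono (lin_interp S \<tau>)"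
proof (rule strict_monoI)
  have mono: "S j \<le> S k" if "j \<le> k" for j k
    using that by (induction k rule: int_ge_induct) (auto intro: order_trans less_imp_le inc)
  fix a b :: real
  assume "a < b"
  define ka kb where "ka = \<lfloor>a/\<tau>\<rfloor>" and "kb = \<lfloor>b/\<tau>\<rfloor>"
  have a: "0 \<le> a/\<tau> - ka" "a/\<tau> - ka < 1" and b: "0 \<le> b/\<tau> - kb" "b/\<tau> - kb < 1"
    using lin_interp_floor(2,3)[OF assms(1)] assms(1) unfolding ka_def kb_def
    by (auto simp: field_simps)
  have "ka \<le> kb"
    unfolding ka_def kb_def using \<open>a < b\<close> assms(1) by (intro floor_mono divide_right_mono) auto
  show "lin_interp S \<tau> a < lin_interp S \<tau> b"
  proof (cases "ka = kb")
    case True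
    have "a/\<tau> < b/\<tau>"
      using \<open>a < b\<close> assms(1) by (simp add: divide_strict_right_mono)
    then show ?thesis
      using True inc[of kb] unfolding lin_interp_floor(1)[OF assms(1)] ka_def kb_def
      by (simp add: mult_strict_right_mono)
  next
    case False
    have "lin_interp S \<tau> a < S ka + 1 * (S (ka + 1) - S ka)"
      unfolding lin_interp_floor(1)[OF assms(1)] ka_def[symmetric]
      using a inc[of ka] by (intro add_strict_left_mono mult_strict_right_mono) auto
    also have "\<dots> \<le> S kb"
      using False \<open>ka \<le> kb\<close> by (simp add: mono)
    also have "\<dots> \<le> lin_interp S \<tau> b"
      unfolding lin_interp_floor(1)[OF assms(1)] kb_def[symmetric] using b inc[of kb] by simp
    finally show ?thesis .
  qed
qed

lemma surj_lin_interp: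
  assumes "\<tau> > 0" and "c > 0" and inc: "\<And>k. S (k + 1) - S k \<ge> c"
  shows "surj (lin_interp S \<tau>)"
proof -
  have up: "S (int n) \<ge> S 0 + c * n" for n
  proof (induction n)
    case (Suc n)
    then show ?case
      using inc[of "int n"] by (simp add: algebra_simps)
  qed simp
  have down: "S (- int n) \<le> S 0 - c * n" for n
  proof (induction n)
    case (Suc n)
    then show ?case
      using inc[of "- int (Suc n)"] by (simp add: algebra_simps)
  qed simp
  have "v \<in> range (lin_interp S \<tau>)" for v
  proof -
    obtain n :: nat where "\<bar>v - S 0\<bar> / c < n"
      using reals_Archimedean2 by blast
    then have n: "\<bar>v - S 0\<bar> < c * n"
      using \<open>c > 0\<close> by (simp add: field_simps)
    have "lin_interp S \<tau> (of_int (- int n) * \<tau>) = S (- int n)"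
      and "lin_interp S \<tau> (of_int (int n) * \<tau>) = S (int n)"
      by (rule lin_interp_node[OF assms(1)])+
    then have "lin_interp S \<tau> (of_int (- int n) * \<tau>) \<le> v" "v \<le> lin_interp S \<tau> (of_int (int n) * \<tau>)"
      using up[of n] down[of n] n by linarith+
    moreover have "of_int (- int n) * \<tau> \<le> of_int (int n) * \<tau>"
      using assms(1) by simp
    ultimately show ?thesis
      using IVT'[OF _ _ _ continuous_on_subset[OF continuous_on_lin_interp[OF assms(1)]]] by blast
  qed
  then show ?thesis
    by auto
qed

lemma increasing_homeomorphismI:
  fixes f :: "real \<Rightarrow> real"
  assumes "strict_mono f" and "surj f" and "continuous_on UNIV f"
  shows "increasing_homeomorphism f"
proof -
  have inv_f: "inv f (f z) = z" and f_inv: "f (inv f y) = y" for y z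
    using assms(1,2) by (auto simp: strict_mono_imp_inj_on surj_f_inv_f)
  have "isCont (inv f) y" for y
  proof -
    have "isCont (inv f) (f (inv f y))"
      by (rule isCont_inverse_function[of 1])
        (use inv_f assms(3) in \<open>auto simp: continuous_on_eq_continuous_at\<close>)
    then show ?thesis
      by (simp add: f_inv)
  qed
  then have "homeomorphism UNIV UNIV f (inv f)"
    by (intro homeomorphismI) (auto simp: inv_f f_inv assms(3) continuous_at_imp_continuous_on)
  then show ?thesis
    unfolding increasing_homeomorphism_def using assms(1) strict_mono_mono by blast
qed

lemma increasing_homeomorphism_near_coarsely_increasing:
  fixes s :: "real \<Rightarrow> real"
  assumes "\<epsilon> > 0" and coarse: "\<And>t r. r \<in> {0..3 * \<epsilon>} \<Longrightarrow> \<bar>s (t + r) - s t - r\<bar> < \<epsilon>"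
  shows "\<exists>g. increasing_homeomorphism g \<and> g 0 = s 0 \<and> (\<forall>t. \<bar>g t - s t\<bar> < 2 * \<epsilon>)"
proof -
  define \<tau> where "\<tau> = 3 * \<epsilon>"
  have "\<tau> > 0"
    using assms(1) by (simp add: \<tau>_def)
  define S where "S k = s (of_int k * \<tau>)" for k :: int
  have step: "\<bar>S (k + 1) - S k - \<tau>\<bar> < \<epsilon>" for k
    using coarse[of \<tau> "of_int k * \<tau>"] \<open>\<tau> > 0\<close> unfolding S_def \<tau>_def by (simp add: algebra_simps)
  then have inc: "S (k + 1) - S k \<ge> 2 * \<epsilon>" for k
    unfolding \<tau>_def by (smt (verit))
  then have strict_inc: "S k < S (k + 1)" for k
    using assms(1) by (smt (verit))
  define g where "g = lin_interp S \<tau>"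
  have "increasing_homeomorphism g"
    unfolding g_def using \<open>\<tau> > 0\<close> assms(1) inc strict_inc
    by (intro increasing_homeomorphismI strict_mono_lin_interp surj_lin_interp[of _ "2 * \<epsilon>"]
        continuous_on_lin_interp) auto
  moreover have "g 0 = s 0"
    using lin_interp_node[OF \<open>\<tau> > 0\<close>, of S 0] by (simp add: g_def S_def)
  moreover have "\<bar>g t - s t\<bar> < 2 * \<epsilon>" for t
  proof -
    define k where "k = \<lfloor>t/\<tau>\<rfloor>"
    define r where "r = t - of_int k * \<tau>"
    have r: "r \<in> {0..\<tau>}"
      using lin_interp_floor(2,3)[OF \<open>\<tau> > 0\<close>, of t] unfolding r_def k_def by (auto simp: algebra_simps)
    have l: "t/\<tau> - k = r/\<tau>" "0 \<le> r/\<tau>" "r/\<tau> \<le> 1"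
      using r \<open>\<tau> > 0\<close> unfolding r_def by (auto simp: field_simps)
    have "g t - S k - r = r/\<tau> * (S (k + 1) - S k - \<tau>)"
      unfolding g_def lin_interp_floor(1)[OF \<open>\<tau> > 0\<close>] k_def[symmetric] l(1)
      using \<open>\<tau> > 0\<close> by (simp add: field_simps)
    then have "\<bar>g t - S k - r\<bar> = r/\<tau> * \<bar>S (k + 1) - S k - \<tau>\<bar>"
      by (simp only: abs_mult abs_of_nonneg[OF l(2)])
    also have "\<dots> \<le> \<bar>S (k + 1) - S k - \<tau>\<bar>"
      by (rule mult_left_le_one_le) (use l(2,3) in auto)
    finally have "\<bar>g t - S k - r\<bar> \<le> \<bar>S (k + 1) - S k - \<tau>\<bar>" .
    moreover have "\<bar>s t - S k - r\<bar> < \<epsilon>"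
      using coarse[of r "of_int k * \<tau>"] r unfolding S_def r_def \<tau>_def by simp
    ultimately show ?thesis
      using step[of k] by linarith
  qed
  ultimately show ?thesis
    by blast
qed

lemma Inter_decseq_closed_nonempty:
  fixes F :: "nat \<Rightarrow> 'a::topological_space set"
  assumes "compact (UNIV :: 'a set)" and "\<And>n. closed (F n)" and "\<And>n. F n \<noteq> {}" and "decseq F"
  shows "\<Inter>(range F) \<noteq> {}"
proof -
  have "UNIV \<inter> (\<Inter>n\<in>UNIV. F n) \<noteq> {}"
  proof (rule compact_imp_fip_image[OF assms(1)])
    fix N :: "nat set"
    assume "finite N"
    then have "F (Max N) \<subseteq> (\<Inter>n\<in>N. F n)"
      using \<open>decseq F\<close> Max_ge unfolding decseq_def by (meson INT_greatest)
    then show "UNIV \<inter> (\<Inter>n\<in>N. F n) \<noteq> {}"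
      using assms(3)[of "Max N"] by (cases "N = {}") auto
  qed (use assms(2) in auto)
  then show ?thesis
    by simp
qed

lemma setdist_pt_eq_infdist: "A \<noteq> {} \<Longrightarrow> setdist_pt z A = infdist z A"
  unfolding setdist_pt_def infdist_def by simp

locale continuous_flow =
  fixes \<phi> :: "real \<Rightarrow> 'a::metric_space \<Rightarrow> 'a"
  assumes is_flow: "is_flow \<phi>"
begin

lemma flow_0 [simp]: "\<phi> 0 z = z"
  using is_flow unfolding is_flow_def by simp

lemma flow_add: "\<phi> a (\<phi> b z) = \<phi> (a + b) z"
  using is_flow unfolding is_flow_def by (metis comp_apply)

lemma flow_inverse [simp]: "\<phi> (- t) (\<phi> t z) = z"
  by (simp add: flow_add)

lemma continuous_on_flow: "continuous_on UNIV (\<lambda>(t, x). \<phi> t x)"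
  using is_flow unfolding is_flow_def by simp

lemma continuous_on_flow_time: "continuous_on UNIV (\<lambda>t. \<phi> t z)"
  using continuous_on_compose2[OF continuous_on_flow, of UNIV "\<lambda>t. (t, z)"]
  by (simp add: continuous_on_Pair)

lemma continuous_on_flow_space: "continuous_on UNIV (\<phi> t)"
  using continuous_on_compose2[OF continuous_on_flow, of UNIV "\<lambda>x. (t, x)"]
  by (simp add: continuous_on_Pair)

lemma closed_fixed_points: "closed {x. \<phi> t x = x}"
  by (rule closed_Collect_eq) (auto intro: continuous_intros continuous_on_flow_space)

lemma closed_Sing: "closed (Sing \<phi>)"
proof -
  have "Sing \<phi> = (\<Inter>t. {x. \<phi> t x = x})"
    unfolding Sing_def by auto
  then show ?thesis
    using closed_fixed_points by auto
qed

lemma flow_in_Sing_iff [simp]: "\<phi> t z \<in> Sing \<phi> \<longleftrightarrow> z \<in> Sing \<phi>"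
  by (metis (mono_tags, lifting) Sing_def flow_inverse mem_Collect_eq)

lemma dist_flow_retimed_lt:
  assumes "\<And>t w. \<bar>t\<bar> < \<rho> \<Longrightarrow> dist (\<phi> t w) w < \<beta>" and "\<bar>t' - t\<bar> < \<rho>"
  shows "dist p (\<phi> t' y) < dist p (\<phi> t y) + \<beta>"
proof -
  have "\<phi> t' y = \<phi> (t' - t) (\<phi> t y)"
    by (simp add: flow_add)
  then have "dist (\<phi> t' y) (\<phi> t y) < \<beta>"
    using assms by simp
  then show ?thesis
    using dist_triangle[of p "\<phi> t' y" "\<phi> t y"] by (simp add: dist_commute)
qed

lemma notin_Sing_if_relatively_close:
  assumes "x \<notin> Sing \<phi>" and "dist x y \<le> \<delta> * setdist_pt x (Sing \<phi>)" and "0 \<le> \<delta>" and "\<delta> < 1"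
  shows "y \<notin> Sing \<phi>"
proof
  assume y: "y \<in> Sing \<phi>"
  then have "setdist_pt x (Sing \<phi>) \<le> dist x y"
    by (subst setdist_pt_eq_infdist) (auto intro: infdist_le)
  with assms(2,3) have "dist x y \<le> \<delta> * dist x y"
    by (meson \<open>setdist_pt x (Sing \<phi>) \<le> dist x y\<close> mult_left_mono order_trans)
  with \<open>\<delta> < 1\<close> have "x = y"
    by (metis mult_le_cancel_right1 dist_eq_0_iff zero_le_dist linorder_not_le antisym)
  with assms(1) y show False
    by simp
qed


lemma flow_of_int_mult_period:
  assumes "\<phi> p w = w"
  shows "\<phi> (of_int k * p) w = w"
proof -
  have nat_mult: "\<phi> (real n * q) w = w" if "\<phi> q w = w" for n q
  proof (induction n)
    case (Suc n)
    have "\<phi> (real (Suc n) * q) w = \<phi> q (\<phi> (real n * q) w)"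
      by (simp add: flow_add algebra_simps)
    with Suc that show ?case
      by simp
  qed simp
  have "\<phi> (- p) w = w"
    using flow_inverse[of p w] assms by simp
  then show ?thesis
    using nat_mult[OF assms, of "nat k"] nat_mult[of "- p" "nat (- k)"]
    by (cases "k \<ge> 0") (auto simp: algebra_simps)
qed

lemma in_Sing_if_dyadic_periods:
  assumes "c > 0" and periods: "\<And>n. \<phi> (c / 2 ^ n) w = w"
  shows "w \<in> Sing \<phi>"
  unfolding Sing_def
proof (intro CollectI allI)
  fix t
  have "t \<in> closure {t. \<phi> t w = w}"
    unfolding closure_approachable
  proof (intro allI impI)
    fix e :: real
    assume "e > 0"
    obtain n where n: "c / e < 2 ^ n"
      using real_arch_pow[of 2 "c / e"] by auto
    define p where "p = c / 2 ^ n"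
    have "p > 0" and "p < e"
      using n \<open>e > 0\<close> \<open>c > 0\<close> by (auto simp: p_def field_simps)
    have "\<phi> (of_int \<lfloor>t/p\<rfloor> * p) w = w"
      using flow_of_int_mult_period periods p_def by blast
    moreover have "dist (of_int \<lfloor>t/p\<rfloor> * p) t < e"
      using floor_divide_lower[OF \<open>p > 0\<close>, of t] floor_divide_upper[OF \<open>p > 0\<close>, of t] \<open>p < e\<close>
      by (simp add: dist_real_def algebra_simps)
    ultimately show "\<exists>y\<in>{t. \<phi> t w = w}. dist y t < e"
      by blast
  qed
  moreover have "closed {t. \<phi> t w = w}"
    by (rule closed_Collect_eq) (auto intro: continuous_intros continuous_on_flow_time)
  ultimately show "\<phi> t w = w"
    by (simp add: closure_closed)
qed

definition uniformly_displacing :: "real \<Rightarrow> real \<Rightarrow> bool" where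
  "uniformly_displacing b \<eta> \<longleftrightarrow>
    (\<forall>w. w \<notin> Sing \<phi> \<longrightarrow> \<eta> \<le> dist w (\<phi> b w) \<and> \<eta> \<le> dist w (\<phi> (- b) w))"

(* At a parameter t with h t = \<plusminus>b the points \<phi>_t z and \<phi>_(t + h t) z would be at least \<eta> apart,
   so h never takes the values \<plusminus>b. *)
lemma time_shift_small_at_endpoints_iff:
  assumes "uniformly_displacing b \<eta>" and "z \<notin> Sing \<phi>" and "p \<le> q" and "continuous_on {p..q} h"
    and tracks: "\<And>t. t \<in> {p..q} \<Longrightarrow> dist (\<phi> t z) (\<phi> (t + h t) z) < \<eta>"
  shows "\<bar>h p\<bar> < b \<longleftrightarrow> \<bar>h q\<bar> < b"
proof (rule continuous_on_avoiding_bound_same_side[OF assms(3,4)])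
  fix t
  assume t: "t \<in> {p..q}"
  have "\<phi> (t + h t) z = \<phi> (h t) (\<phi> t z)"
    by (simp add: flow_add add.commute)
  moreover have "\<phi> t z \<notin> Sing \<phi>"
    using assms(2) by simp
  ultimately show "\<bar>h t\<bar> \<noteq> b"
    using tracks[OF t] assms(1) unfolding uniformly_displacing_def
    by (metis abs_if not_le minus_minus)
qed

lemma tracking_time_change_stays_close:
  assumes "uniformly_displacing b \<eta>" and "x \<notin> Sing \<phi>" and "continuous_on UNIV g"
    and tracks: "\<And>t. dist (\<phi> t x) (\<phi> (g t) y) < \<eta>"
    and "\<phi> (g t\<^sub>0) y = \<phi> u x" and "\<bar>u - t\<^sub>0\<bar> < b"
  shows "\<exists>v. \<bar>v - t\<^sub>1\<bar> < b \<and> \<phi> (g t\<^sub>1) y = \<phi> v x"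
proof -
  have y: "y = \<phi> (u - g t\<^sub>0) x"
    using flow_inverse[of "g t\<^sub>0" y] assms(5) by (simp add: flow_add)
  define h where "h t = g t + (u - g t\<^sub>0) - t" for t
  have orbit: "\<phi> (t + h t) x = \<phi> (g t) y" for t
    unfolding h_def y flow_add by (simp add: algebra_simps)
  have "continuous_on A h" for A
    unfolding h_def by (intro continuous_intros continuous_on_subset[OF assms(3)]) auto
  moreover have "dist (\<phi> t x) (\<phi> (t + h t) x) < \<eta>" for t
    unfolding orbit by (rule tracks)
  ultimately have "\<bar>h p\<bar> < b \<longleftrightarrow> \<bar>h q\<bar> < b" if "p \<le> q" for p q
    using that by (intro time_shift_small_at_endpoints_iff[OF assms(1,2)])
  moreover have "\<bar>h t\<^sub>0\<bar> < b"
    using assms(6) by (simp add: h_def)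
  ultimately have "\<bar>h t\<^sub>1\<bar> < b"
    by (metis linorder_le_cases)
  then show ?thesis
    using orbit[of t\<^sub>1] by (intro exI[of _ "t\<^sub>1 + h t\<^sub>1"]) auto
qed

lemma shadowing_time_change_coarsely_increasing:
  assumes "uniformly_displacing \<epsilon> \<eta>" and "\<epsilon> > 0" and "y \<notin> Sing \<phi>" and "continuous_on UNIV s"
    and shadow: "\<And>t. dist (\<phi> t x) (\<phi> (s t) y) \<le> \<delta>" and "\<delta> < \<eta> / 2"
    and equicont: "\<And>r a b. r \<in> {0..\<tau>} \<Longrightarrow> dist a b \<le> \<delta> \<Longrightarrow> dist (\<phi> r a) (\<phi> r b) < \<eta> / 2"
    and "r \<in> {0..\<tau>}"
  shows "\<bar>s (t + r) - s t - r\<bar> < \<epsilon>"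
proof -
  define w where "w = \<phi> (s t) y"
  define h where "h r' = s (t + r') - s t - r'" for r'
  have "\<bar>h 0\<bar> < \<epsilon> \<longleftrightarrow> \<bar>h r\<bar> < \<epsilon>"
  proof (rule time_shift_small_at_endpoints_iff[OF assms(1), of w 0 r h])
    show "w \<notin> Sing \<phi>"
      using assms(3) by (simp add: w_def)
    show "continuous_on {0..r} h"
      unfolding h_def
      by (intro continuous_intros continuous_on_compose2[OF assms(4), of _ "\<lambda>r'. t + r'"]) auto
    fix r'
    assume r': "r' \<in> {0..r}"
    have "dist (\<phi> r' w) (\<phi> r' (\<phi> t x)) < \<eta> / 2"
      using equicont[of r' w "\<phi> t x"] shadow[of t] r' \<open>r \<in> {0..\<tau>}\<close>
      by (auto simp: w_def dist_commute)
    moreover have "dist (\<phi> r' (\<phi> t x)) (\<phi> (r' + h r') w) \<le> \<delta>"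
      using shadow[of "t + r'"] by (simp add: w_def h_def flow_add add.commute)
    ultimately show "dist (\<phi> r' w) (\<phi> (r' + h r') w) < \<eta>"
      using dist_triangle[of "\<phi> r' w" "\<phi> (r' + h r') w" "\<phi> r' (\<phi> t x)"] \<open>\<delta> < \<eta> / 2\<close> by linarith
  qed (use \<open>r \<in> {0..\<tau>}\<close> in auto)
  then show ?thesis
    using \<open>\<epsilon> > 0\<close> by (simp add: h_def)
qed

lemma shadowing_time_change_near_homeomorphism:
  assumes "uniformly_displacing \<epsilon> \<eta>" and "\<epsilon> > 0" and "y \<notin> Sing \<phi>" and "continuous_on UNIV s"
    and "\<And>t. dist (\<phi> t x) (\<phi> (s t) y) \<le> \<delta>" and "\<delta> < \<eta> / 2"
    and "\<And>r a b. r \<in> {0..3 * \<epsilon>} \<Longrightarrow> dist a b \<le> \<delta> \<Longrightarrow> dist (\<phi> r a) (\<phi> r b) < \<eta> / 2"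
  shows "\<exists>g. increasing_homeomorphism g \<and> g 0 = s 0 \<and> (\<forall>t. \<bar>g t - s t\<bar> < 2 * \<epsilon>)"
proof (rule increasing_homeomorphism_near_coarsely_increasing[OF assms(2)])
  show "\<bar>s (t + r) - s t - r\<bar> < \<epsilon>" if "r \<in> {0..3 * \<epsilon>}" for t r
    by (rule shadowing_time_change_coarsely_increasing[OF assms that])
qed

end

locale compact_flow = continuous_flow \<phi> for \<phi> :: "real \<Rightarrow> 'a::metric_space \<Rightarrow> 'a" +
  assumes compact_space: "compact (UNIV :: 'a set)"
begin

lemma dist_le_diameter:
  fixes a b :: 'a
  shows "dist a b \<le> diameter (UNIV :: 'a set)"
  using diameter_bounded_bound[OF compact_imp_bounded[OF compact_space]] by blast

lemma setdist_pt_le_diameter: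
  fixes z :: 'a
  shows "setdist_pt z A \<le> diameter (UNIV :: 'a set)"
proof (cases "A = {}")
  case False
  then obtain a where "a \<in> A"
    by blast
  then show ?thesis
    using False dist_le_diameter[of z a] infdist_le[of a A z] by (simp add: setdist_pt_eq_infdist)
qed (simp add: setdist_pt_def)

lemma singular_expansive_if_expansive_off_Sing:
  assumes "expansive_on \<phi> (UNIV - Sing \<phi>)"
  shows "singular_expansive \<phi>"
  unfolding singular_expansive_def
proof (intro allI impI)
  fix \<epsilon> :: real
  assume "\<epsilon> > 0"
  with assms obtain \<delta>\<^sub>0 where "\<delta>\<^sub>0 > 0" and expansive: "\<And>x y s. x \<notin> Sing \<phi> \<Longrightarrow> y \<notin> Sing \<phi> \<Longrightarrow>
      continuous_on UNIV s \<Longrightarrow> s 0 = 0 \<Longrightarrow> \<forall>t. dist (\<phi> t x) (\<phi> (s t) y) \<le> \<delta>\<^sub>0 \<Longrightarrow>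
      \<exists>u\<in>{-\<epsilon>..\<epsilon>}. y = \<phi> u x"
    unfolding expansive_on_def by (metis Diff_iff UNIV_I)
  define D where "D = diameter (UNIV :: 'a set)"
  have "D \<ge> 0"
    unfolding D_def by (metis dist_le_diameter zero_le_dist order_trans)
  define \<delta> where "\<delta> = min (1/2) (\<delta>\<^sub>0 / (D + 1))"
  have "\<delta> > 0" and "\<delta> < 1"
    unfolding \<delta>_def using \<open>\<delta>\<^sub>0 > 0\<close> \<open>D \<ge> 0\<close> by auto
  have "\<delta> * D \<le> \<delta>\<^sub>0"
  proof -
    have "\<delta> * D \<le> \<delta>\<^sub>0 / (D + 1) * D"
      unfolding \<delta>_def using \<open>D \<ge> 0\<close> by (intro mult_right_mono) auto
    also have "\<dots> \<le> \<delta>\<^sub>0"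
      using \<open>D \<ge> 0\<close> \<open>\<delta>\<^sub>0 > 0\<close> by (simp add: field_simps)
    finally show ?thesis .
  qed
  show "\<exists>\<delta>>0. \<forall>x y s. increasing_homeomorphism s
      \<and> (\<forall>t. dist (\<phi> t x) (\<phi> (s t) y) \<le> \<delta> * setdist_pt (\<phi> t x) (Sing \<phi>))
      \<longrightarrow> (\<exists>t0. \<exists>u\<in>{t0-\<epsilon>..t0+\<epsilon>}. \<phi> (s t0) y = \<phi> u x)"
  proof (rule exI[of _ \<delta>], intro conjI allI impI \<open>\<delta> > 0\<close>; elim conjE)
    fix x y and s :: "real \<Rightarrow> real"
    assume "increasing_homeomorphism s"
      and close: "\<forall>t. dist (\<phi> t x) (\<phi> (s t) y) \<le> \<delta> * setdist_pt (\<phi> t x) (Sing \<phi>)"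
    define y' where "y' = \<phi> (s 0) y"
    have close0: "dist x y' \<le> \<delta> * setdist_pt x (Sing \<phi>)"
      using close[rule_format, of 0] by (simp add: y'_def)
    have "\<exists>u\<in>{-\<epsilon>..\<epsilon>}. y' = \<phi> u x"
    proof (cases "x \<in> Sing \<phi>")
      case True
      then have "setdist_pt x (Sing \<phi>) = 0"
        by (subst setdist_pt_eq_infdist) auto
      with close0 have "y' = x"
        by simp
      then show ?thesis
        using \<open>\<epsilon> > 0\<close> by (intro bexI[of _ 0]) auto
    next
      case False
      show ?thesis
      proof (rule expansive[of x y' "\<lambda>t. s t - s 0"])
        show "y' \<notin> Sing \<phi>"
          using notin_Sing_if_relatively_close[OF False close0 _ \<open>\<delta> < 1\<close>] \<open>\<delta> > 0\<close> by simp
        show "continuous_on UNIV (\<lambda>t. s t - s 0)"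
          using \<open>increasing_homeomorphism s\<close>
          unfolding increasing_homeomorphism_def homeomorphism_def by (auto intro: continuous_intros)
        show "\<forall>t. dist (\<phi> t x) (\<phi> (s t - s 0) y') \<le> \<delta>\<^sub>0"
        proof
          fix t
          have "dist (\<phi> t x) (\<phi> (s t - s 0) y') \<le> \<delta> * D"
            using close[rule_format, of t] setdist_pt_le_diameter[of "\<phi> t x" "Sing \<phi>"] \<open>\<delta> > 0\<close>
            unfolding y'_def D_def flow_add by (smt (verit) mult_left_mono)
          then show "dist (\<phi> t x) (\<phi> (s t - s 0) y') \<le> \<delta>\<^sub>0"
            using \<open>\<delta> * D \<le> \<delta>\<^sub>0\<close> by linarith
        qed
      qed (use False in auto)
    qed
    then show "\<exists>t0. \<exists>u\<in>{t0-\<epsilon>..t0+\<epsilon>}. \<phi> (s t0) y = \<phi> u x"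
      unfolding y'_def by (intro exI[of _ 0]) auto
  qed
qed


lemma uniformly_continuous_on_flow: "uniformly_continuous_on ({a..b} \<times> UNIV) (\<lambda>(t, x). \<phi> t x)"
  by (intro compact_uniformly_continuous continuous_on_subset[OF continuous_on_flow]
      compact_Times compact_space) auto

lemma flow_uniformly_close_for_small_time:
  assumes "e > 0"
  shows "\<exists>\<rho>>0. \<forall>t x. \<bar>t\<bar> < \<rho> \<longrightarrow> dist (\<phi> t x) x < e"
proof -
  obtain d where "d > 0" and d: "\<And>p q. p \<in> {-1..1} \<times> UNIV \<Longrightarrow> q \<in> {-1..1} \<times> UNIV \<Longrightarrow>
      dist q p < d \<Longrightarrow> dist ((\<lambda>(t, x). \<phi> t x) q) ((\<lambda>(t, x). \<phi> t x) p) < e"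
    using uniformly_continuous_on_flow[of "-1" 1, unfolded uniformly_continuous_on_def] assms
    by metis
  have "dist (\<phi> t x) x < e" if "\<bar>t\<bar> < min d 1" for t x
    using d[of "(0, x)" "(t, x)"] that by (simp add: dist_Pair_Pair dist_real_def abs_less_iff)
  then show ?thesis
    using \<open>d > 0\<close> by (intro exI[of _ "min d 1"]) auto
qed

lemma flow_equicontinuous_on_compact_time:
  assumes "e > 0"
  shows "\<exists>\<zeta>>0. \<forall>t\<in>{a..b}. \<forall>x y. dist x y < \<zeta> \<longrightarrow> dist (\<phi> t x) (\<phi> t y) < e"
proof -
  obtain d where "d > 0" and d: "\<And>p q. p \<in> {a..b} \<times> UNIV \<Longrightarrow> q \<in> {a..b} \<times> UNIV \<Longrightarrow>
      dist q p < d \<Longrightarrow> dist ((\<lambda>(t, x). \<phi> t x) q) ((\<lambda>(t, x). \<phi> t x) p) < e"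
    using uniformly_continuous_on_flow[of a b, unfolded uniformly_continuous_on_def] assms
    by metis
  have "dist (\<phi> t x) (\<phi> t y) < e" if "t \<in> {a..b}" "dist x y < d" for t x y
    using d[of "(t, y)" "(t, x)"] that by (simp add: dist_Pair_Pair)
  then show ?thesis
    using \<open>d > 0\<close> by blast
qed

lemma exists_time_moving_regular_points:
  assumes "open (Sing \<phi>)" and "c > 0"
  shows "\<exists>b. 0 < b \<and> b \<le> c \<and> (\<forall>w. w \<notin> Sing \<phi> \<longrightarrow> \<phi> b w \<noteq> w)"
proof (rule ccontr)
  assume "\<not> ?thesis"
  then have fixes_some: "\<exists>w. w \<notin> Sing \<phi> \<and> \<phi> b w = w" if "0 < b" "b \<le> c" for b
    using that by blast
  define F where "F n = - Sing \<phi> \<inter> {w. \<phi> (c / 2 ^ n) w = w}" for n :: nat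
  have "\<Inter>(range F) \<noteq> {}"
  proof (rule Inter_decseq_closed_nonempty[OF compact_space])
    show "closed (F n)" for n
      unfolding F_def using assms(1) closed_fixed_points by (intro closed_Int) auto
    show "F n \<noteq> {}" for n
      using fixes_some[of "c / 2 ^ n"] assms(2) by (auto simp: F_def divide_le_eq)
    show "decseq F"
    proof (rule decseq_SucI)
      fix n
      have "\<phi> (c / 2 ^ n) w = \<phi> (c / 2 ^ Suc n) (\<phi> (c / 2 ^ Suc n) w)" for w
        by (simp add: flow_add)
      then show "F (Suc n) \<subseteq> F n"
        unfolding F_def by auto
    qed
  qed
  then obtain w where "w \<notin> Sing \<phi>" and "\<And>n. \<phi> (c / 2 ^ n) w = w"
    unfolding F_def by auto
  with in_Sing_if_dyadic_periods[OF assms(2)] show False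
    by blast
qed

lemma exists_uniformly_displacing:
  assumes "open (Sing \<phi>)" and "c > 0"
  shows "\<exists>b \<eta>. 0 < b \<and> b \<le> c \<and> 0 < \<eta> \<and> uniformly_displacing b \<eta>"
proof -
  obtain b where "0 < b" "b \<le> c" and moves: "\<And>w. w \<notin> Sing \<phi> \<Longrightarrow> \<phi> b w \<noteq> w"
    using exists_time_moving_regular_points[OF assms] by blast
  have "\<exists>\<eta>>0. uniformly_displacing b \<eta>"
  proof (cases "Sing \<phi> = UNIV")
    case False
    have "compact (- Sing \<phi>)"
      using compact_diff[OF compact_space assms(1)] by (simp add: Compl_eq_Diff_UNIV)
    moreover have "- Sing \<phi> \<noteq> {}"
      using False by auto
    moreover have "continuous_on (- Sing \<phi>) (\<lambda>w. dist w (\<phi> b w))"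
      by (intro continuous_intros continuous_on_subset[OF continuous_on_flow_space]) auto
    ultimately obtain w\<^sub>0 where "w\<^sub>0 \<notin> Sing \<phi>"
      and min: "\<And>w. w \<notin> Sing \<phi> \<Longrightarrow> dist w\<^sub>0 (\<phi> b w\<^sub>0) \<le> dist w (\<phi> b w)"
      by (metis ComplD ComplI continuous_attains_inf)
    have "dist w (\<phi> (- b) w) = dist (\<phi> (- b) w) (\<phi> b (\<phi> (- b) w))" for w
      by (simp add: flow_add dist_commute)
    then have "uniformly_displacing b (dist w\<^sub>0 (\<phi> b w\<^sub>0))"
      unfolding uniformly_displacing_def using min by simp
    moreover have "dist w\<^sub>0 (\<phi> b w\<^sub>0) > 0"
      using moves[OF \<open>w\<^sub>0 \<notin> Sing \<phi>\<close>] by (simp add: eq_commute)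
    ultimately show ?thesis
      by blast
  qed (auto simp: uniformly_displacing_def intro: exI[of _ 1])
  with \<open>0 < b\<close> \<open>b \<le> c\<close> show ?thesis
    by blast
qed

lemma setdist_Sing_bounded_below:
  assumes "open (Sing \<phi>)"
  shows "\<exists>m>0. \<forall>z. z \<notin> Sing \<phi> \<longrightarrow> m \<le> setdist_pt z (Sing \<phi>)"
proof (cases "Sing \<phi> = UNIV")
  case False
  then obtain z where "z \<notin> Sing \<phi>"
    by blast
  show ?thesis
  proof (cases "Sing \<phi> = {}")
    case True
    obtain t where "\<phi> t z \<noteq> z"
      using \<open>z \<notin> Sing \<phi>\<close> unfolding Sing_def by auto
    then have "0 < diameter (UNIV :: 'a set)"
      using dist_le_diameter[of "\<phi> t z" z] by (metis zero_less_dist_iff order_less_le_trans)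
    then show ?thesis
      using True by (intro exI[of _ "diameter (UNIV :: 'a set)"]) (simp add: setdist_pt_def)
  next
    case nonempty: False
    have "compact (- Sing \<phi>)"
      using compact_diff[OF compact_space assms] by (simp add: Compl_eq_Diff_UNIV)
    moreover have "- Sing \<phi> \<noteq> {}"
      using \<open>z \<notin> Sing \<phi>\<close> by auto
    moreover have "continuous_on (- Sing \<phi>) (\<lambda>z. infdist z (Sing \<phi>))"
      by (intro continuous_at_imp_continuous_on ballI continuous_intros)
    ultimately obtain z\<^sub>0 where "z\<^sub>0 \<notin> Sing \<phi>"
      and min: "\<And>z. z \<notin> Sing \<phi> \<Longrightarrow> infdist z\<^sub>0 (Sing \<phi>) \<le> infdist z (Sing \<phi>)"
      by (metis ComplD ComplI continuous_attains_inf)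
    moreover have "infdist z\<^sub>0 (Sing \<phi>) > 0"
      by (rule infdist_pos_not_in_closed[OF closed_Sing nonempty \<open>z\<^sub>0 \<notin> Sing \<phi>\<close>])
    ultimately show ?thesis
      using nonempty by (auto simp: setdist_pt_eq_infdist)
  qed
qed (auto intro: exI[of _ 1])

lemma expansive_off_Sing_if_singular_expansive:
  assumes "singular_expansive \<phi>" and "open (Sing \<phi>)"
  shows "expansive_on \<phi> (UNIV - Sing \<phi>)"
  unfolding expansive_on_def
proof (intro allI impI)
  fix \<epsilon> :: real
  assume "\<epsilon> > 0"
  obtain m where "m > 0" and m: "\<And>z. z \<notin> Sing \<phi> \<Longrightarrow> m \<le> setdist_pt z (Sing \<phi>)"
    using setdist_Sing_bounded_below[OF assms(2)] by blast
  obtain b \<eta> where "0 < b" "b \<le> \<epsilon>" "0 < \<eta>" and displacing: "uniformly_displacing b \<eta>"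
    using exists_uniformly_displacing[OF assms(2) \<open>\<epsilon> > 0\<close>] by blast
  have "b / 2 > 0"
    using \<open>b > 0\<close> by simp
  then obtain \<delta>\<^sub>s where "\<delta>\<^sub>s > 0" and sing_exp: "\<forall>x y s. increasing_homeomorphism s
      \<and> (\<forall>t. dist (\<phi> t x) (\<phi> (s t) y) \<le> \<delta>\<^sub>s * setdist_pt (\<phi> t x) (Sing \<phi>))
      \<longrightarrow> (\<exists>t\<^sub>0. \<exists>u\<in>{t\<^sub>0 - b/2..t\<^sub>0 + b/2}. \<phi> (s t\<^sub>0) y = \<phi> u x)"
    using assms(1) unfolding singular_expansive_def by blast
  define \<beta> where "\<beta> = min \<eta> (\<delta>\<^sub>s * m) / 2"
  have "\<beta> > 0"
    using \<open>\<eta> > 0\<close> \<open>\<delta>\<^sub>s > 0\<close> \<open>m > 0\<close> by (simp add: \<beta>_def)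
  obtain \<rho> where "\<rho> > 0" and small_time: "\<And>t w. \<bar>t\<bar> < \<rho> \<Longrightarrow> dist (\<phi> t w) w < \<beta>"
    using flow_uniformly_close_for_small_time[OF \<open>\<beta> > 0\<close>] by blast
  obtain \<epsilon>\<^sub>1 \<eta>\<^sub>1 where "0 < \<epsilon>\<^sub>1" "\<epsilon>\<^sub>1 \<le> \<rho> / 2" "0 < \<eta>\<^sub>1" and displacing\<^sub>1: "uniformly_displacing \<epsilon>\<^sub>1 \<eta>\<^sub>1"
    using exists_uniformly_displacing[OF assms(2), of "\<rho> / 2"] \<open>\<rho> > 0\<close> by auto
  obtain \<zeta> where "\<zeta> > 0" and equicont: "\<And>r a b. r \<in> {0..3 * \<epsilon>\<^sub>1} \<Longrightarrow> dist a b < \<zeta> \<Longrightarrow>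
      dist (\<phi> r a) (\<phi> r b) < \<eta>\<^sub>1 / 2"
    using flow_equicontinuous_on_compact_time[of "\<eta>\<^sub>1 / 2" 0 "3 * \<epsilon>\<^sub>1"] \<open>\<eta>\<^sub>1 > 0\<close> by auto
  define \<delta> where "\<delta> = min \<beta> (min \<zeta> (\<eta>\<^sub>1 / 2)) / 2"
  have "\<delta> > 0" "\<delta> \<le> \<beta> / 2" "\<delta> < \<zeta>" "\<delta> < \<eta>\<^sub>1 / 2"
    using \<open>\<beta> > 0\<close> \<open>\<zeta> > 0\<close> \<open>\<eta>\<^sub>1 > 0\<close> by (auto simp: \<delta>_def)
  show "\<exists>\<delta>>0. \<forall>x\<in>UNIV - Sing \<phi>. \<forall>y\<in>UNIV - Sing \<phi>. \<forall>s. continuous_on UNIV s \<and> s 0 = 0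
      \<and> (\<forall>t. dist (\<phi> t x) (\<phi> (s t) y) \<le> \<delta>) \<longrightarrow> (\<exists>u\<in>{-\<epsilon>..\<epsilon>}. y = \<phi> u x)"
  proof (rule exI[of _ \<delta>], intro conjI ballI allI impI \<open>\<delta> > 0\<close>; elim conjE)
    fix x y and s :: "real \<Rightarrow> real"
    assume "x \<in> UNIV - Sing \<phi>" "y \<in> UNIV - Sing \<phi>" "continuous_on UNIV s" "s 0 = 0"
      and shadow: "\<forall>t. dist (\<phi> t x) (\<phi> (s t) y) \<le> \<delta>"
    have "\<exists>g. increasing_homeomorphism g \<and> g 0 = s 0 \<and> (\<forall>t. \<bar>g t - s t\<bar> < 2 * \<epsilon>\<^sub>1)"
    proof (rule shadowing_time_change_near_homeomorphism[OF displacing\<^sub>1 \<open>\<epsilon>\<^sub>1 > 0\<close> _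
          \<open>continuous_on UNIV s\<close> _ \<open>\<delta> < \<eta>\<^sub>1 / 2\<close>])
      show "y \<notin> Sing \<phi>"
        using \<open>y \<in> UNIV - Sing \<phi>\<close> by simp
      show "dist (\<phi> t x) (\<phi> (s t) y) \<le> \<delta>" for t
        using shadow by simp
      show "dist (\<phi> r a) (\<phi> r a') < \<eta>\<^sub>1 / 2" if "r \<in> {0..3 * \<epsilon>\<^sub>1}" "dist a a' \<le> \<delta>" for r a a'
        using equicont[OF that(1)] that(2) \<open>\<delta> < \<zeta>\<close> by simp
    qed
    with \<open>s 0 = 0\<close> obtain g where g: "increasing_homeomorphism g" "g 0 = 0"
      and near_s: "\<And>t. \<bar>g t - s t\<bar> < 2 * \<epsilon>\<^sub>1"
      by auto
    have close: "dist (\<phi> t x) (\<phi> (g t) y) < 2 * \<beta>" for t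
    proof -
      have "dist (\<phi> t x) (\<phi> (g t) y) < dist (\<phi> t x) (\<phi> (s t) y) + \<beta>"
        by (rule dist_flow_retimed_lt[where \<rho> = \<rho>, OF small_time])
          (use near_s[of t] \<open>\<epsilon>\<^sub>1 \<le> \<rho> / 2\<close> in auto)
      with shadow[rule_format, of t] \<open>\<delta> \<le> \<beta> / 2\<close> \<open>\<beta> > 0\<close> show ?thesis
        by linarith
    qed
    have "\<forall>t. dist (\<phi> t x) (\<phi> (g t) y) \<le> \<delta>\<^sub>s * setdist_pt (\<phi> t x) (Sing \<phi>)"
    proof
      fix t
      have "\<delta>\<^sub>s * m \<le> \<delta>\<^sub>s * setdist_pt (\<phi> t x) (Sing \<phi>)"
        using m[of "\<phi> t x"] \<open>x \<in> UNIV - Sing \<phi>\<close> \<open>\<delta>\<^sub>s > 0\<close> by simp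
      then have "2 * \<beta> \<le> \<delta>\<^sub>s * setdist_pt (\<phi> t x) (Sing \<phi>)"
        unfolding \<beta>_def by linarith
      with close[of t] show "dist (\<phi> t x) (\<phi> (g t) y) \<le> \<delta>\<^sub>s * setdist_pt (\<phi> t x) (Sing \<phi>)"
        by linarith
    qed
    then obtain t\<^sub>0 u where "u \<in> {t\<^sub>0 - b/2..t\<^sub>0 + b/2}" and hit: "\<phi> (g t\<^sub>0) y = \<phi> u x"
      using sing_exp[rule_format, OF conjI[OF g(1)]] by blast
    then have "\<bar>u - t\<^sub>0\<bar> < b"
      using \<open>b > 0\<close> by auto
    have tracks: "dist (\<phi> t x) (\<phi> (g t) y) < \<eta>" for t
      using close[of t] min.cobounded1[of \<eta> "\<delta>\<^sub>s * m"] unfolding \<beta>_def by linarith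
    have "continuous_on UNIV g"
      using g(1) unfolding increasing_homeomorphism_def homeomorphism_def by blast
    moreover have "x \<notin> Sing \<phi>"
      using \<open>x \<in> UNIV - Sing \<phi>\<close> by simp
    ultimately obtain v where "\<bar>v - 0\<bar> < b" "\<phi> (g 0) y = \<phi> v x"
      using tracking_time_change_stays_close[OF displacing _ _ tracks hit \<open>\<bar>u - t\<^sub>0\<bar> < b\<close>] by blast
    then show "\<exists>u\<in>{-\<epsilon>..\<epsilon>}. y = \<phi> u x"
      using g(2) \<open>b \<le> \<epsilon>\<close> by (intro bexI[of _ v]) auto
  qed
qed

end

theorem mainTheorem14:
  fixes \<phi> :: "real \<Rightarrow> 'a::metric_space \<Rightarrow> 'a"
  assumes "compact (UNIV :: 'a set)"
    and "is_flow \<phi>"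
  shows "(expansive_on \<phi> (UNIV - Sing \<phi>) \<longrightarrow> singular_expansive \<phi>)
     \<and> (singular_expansive \<phi> \<and> open (Sing \<phi>) \<longrightarrow> expansive_on \<phi> (UNIV - Sing \<phi>))"
proof -
  interpret compact_flow \<phi>
    using assms by unfold_locales
  show ?thesis
    using singular_expansive_if_expansive_off_Sing expansive_off_Sing_if_singular_expansive by blast
qed

end
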